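(* Consider an implication of canonical form $(\ast)$ and an environment $\eta$ such that there is exactly one conjunct ($M=1$) and $\Pi(1)\ge\Omega(j)$ for all $1\le j\le N$. If the implication is unary $\eta$-valid, then the Parametricity Condition holds for it and $\eta$.
   Context: $\mathsf{Heap}$: finite partial functions $\mathsf{PosInt}\to\mathsf{Int}$; $g\sqsubseteq h$ means $h$ extends $g$; $h\cdot g$ union of disjoint heaps; componentwise on $\mathsf{Heap}^n$. $\mathsf{IRel}_n$: upward closed subsets of $\mathsf{Heap}^n$; $p*q=\{\mathbf f\cdot\mathbf g\mid\mathbf f\in p,\mathbf g\in q,\text{componentwise disjoint}\}$; $\Delta_n(X)=\{(h_1,\dots,h_n)\mid\exists f\in X.\ \forall k.\ f\sqsubseteq h_k\}$. Assertions: built from primitive assertions $P$, assertion variables, $\mathsf{true},\mathsf{false},\wedge,\vee,*$, quantifiers over integer variables. $n$-ary meaning under $\eta$ and $\rho:\mathsf{AVar}\to\mathsf{IRel}_n$: $[\![P]\!]^n=\Delta_n([\![P]\!]^{\mathrm{prim}}_\eta)$, $[\![a]\!]^n=\rho(a)$, connectives by $\mathsf{Heap}^n,\emptyset,\cap,\cup,*$, quantifiers by unions/intersections. $n$-ary $\eta$-validity of $\varphi\Rightarrow\psi$: $[\![\varphi]\!]^n_{\eta,\rho}\subseteq[\![\psi]\!]^n_{\eta,\rho}$ for all $\rho:\mathsf{AVar}\to\mathsf{IRel}_n$ (unary: $n=1$). Canonical form $(\ast)$: $\bigwedge_{i=1}^M\varphi_i*a_{i,1}*\cdots*a_{i,M_i}\Rightarrow\bigvee_{j=1}^N\psi_j*b_{j,1}*\cdots*b_{j,N_j}$,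 $M\ge1$, $N\ge0$, $\varphi_i,\psi_j$ free of assertion variables, every $b_{j,k}$ among the $a_{i,k}$. $V=\{a_{i,k}\}$; $\Pi(i)(c)=|\{k\mid a_{i,k}=c\}|$, $\Omega(j)(c)=|\{k\mid b_{j,k}=c\}|$; $\Pi(i)\ge\Omega(j)$ iff $\Pi(i)(c)\ge\Omega(j)(c)$ for all $c\in V$. Disjunct $j$ is empty if $N_j=0$. Parametricity Condition: for all $h,h_1,\dots,h_M\in\mathsf{Heap}$ with $h_i\sqsubseteq h$ and $h_i\in[\![\varphi_i]\!]^1_\eta$ for all $i$, either (1) there are $i,j$ with $h_i\in[\![\psi_j]\!]^1_\eta$ and $\Pi(i)\ge\Omega(j)$, or (2) there is an empty disjunct $j$ with $h\in[\![\psi_j]\!]^1_\eta$. *)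

theory Defs
  imports Main
begin

typedef heap = "{h :: nat \<rightharpoonup> int. finite (dom h) \<and> 0 \<notin> dom h}"
  by (rule exI[of _ Map.empty]) auto

definition hsub :: "heap \<Rightarrow> heap \<Rightarrow> bool" (infix "\<sqsubseteq>" 50) where
  "g \<sqsubseteq> h \<longleftrightarrow> Rep_heap g \<subseteq>\<^sub>m Rep_heap h"

definition hdisj :: "heap \<Rightarrow> heap \<Rightarrow> bool" where
  "hdisj g h \<longleftrightarrow> dom (Rep_heap g) \<inter> dom (Rep_heap h) = {}"

definition hunion :: "heap \<Rightarrow> heap \<Rightarrow> heap" where
  "hunion g h = Abs_heap (Rep_heap g ++ Rep_heap h)"

definition upclosed :: "heap set \<Rightarrow> bool" where
  "upclosed X \<longleftrightarrow> (\<forall>g h. g \<in> X \<longrightarrow> g \<sqsubseteq> h \<longrightarrow> h \<in> X)"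

definition sepstar :: "heap set \<Rightarrow> heap set \<Rightarrow> heap set" where
  "sepstar p q = {hunion f g | f g. f \<in> p \<and> g \<in> q \<and> hdisj f g}"

definition Delta1 :: "heap set \<Rightarrow> heap set" where
  "Delta1 X = {h. \<exists>f\<in>X. f \<sqsubseteq> h}"

datatype ('p, 'v, 'a) assn =
    Prim 'p
  | AVar 'a
  | ATrue
  | AFalse
  | AConj "('p, 'v, 'a) assn" "('p, 'v, 'a) assn"
  | ADisj "('p, 'v, 'a) assn" "('p, 'v, 'a) assn"
  | AStar "('p, 'v, 'a) assn" "('p, 'v, 'a) assn"
  | AEx 'v "('p, 'v, 'a) assn"
  | AAll 'v "('p, 'v, 'a) assn"

fun avars :: "('p, 'v, 'a) assn \<Rightarrow> 'a set" where
  "avars (Prim P) = {}"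
| "avars (AVar a) = {a}"
| "avars ATrue = {}"
| "avars AFalse = {}"
| "avars (AConj p q) = avars p \<union> avars q"
| "avars (ADisj p q) = avars p \<union> avars q"
| "avars (AStar p q) = avars p \<union> avars q"
| "avars (AEx x p) = avars p"
| "avars (AAll x p) = avars p"

text \<open>Unary meaning; prim gives the primitive semantics [[P]]^prim_eta.\<close>
fun sem :: "('p \<Rightarrow> ('v \<Rightarrow> int) \<Rightarrow> heap set) \<Rightarrow> ('v \<Rightarrow> int) \<Rightarrow> ('a \<Rightarrow> heap set)
             \<Rightarrow> ('p, 'v, 'a) assn \<Rightarrow> heap set" where
  "sem prim \<eta> \<rho> (Prim P) = Delta1 (prim P \<eta>)"
| "sem prim \<eta> \<rho> (AVar a) = \<rho> a"
| "sem prim \<eta> \<rho> ATrue = UNIV"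
| "sem prim \<eta> \<rho> AFalse = {}"
| "sem prim \<eta> \<rho> (AConj p q) = sem prim \<eta> \<rho> p \<inter> sem prim \<eta> \<rho> q"
| "sem prim \<eta> \<rho> (ADisj p q) = sem prim \<eta> \<rho> p \<union> sem prim \<eta> \<rho> q"
| "sem prim \<eta> \<rho> (AStar p q) = sepstar (sem prim \<eta> \<rho> p) (sem prim \<eta> \<rho> q)"
| "sem prim \<eta> \<rho> (AEx x p) = (\<Union>n. sem prim (\<eta>(x := n)) \<rho> p)"
| "sem prim \<eta> \<rho> (AAll x p) = (\<Inter>n. sem prim (\<eta>(x := n)) \<rho> p)"

definition valid1 :: "('p \<Rightarrow> ('v \<Rightarrow> int) \<Rightarrow> heap set) \<Rightarrow> ('v \<Rightarrow> int)
                      \<Rightarrow> ('p, 'v, 'a) assn \<Rightarrow> ('p, 'v, 'a) assn \<Rightarrow> bool" where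
  "valid1 prim \<eta> \<phi> \<psi> \<longleftrightarrow>
     (\<forall>\<rho>. (\<forall>a. upclosed (\<rho> a)) \<longrightarrow> sem prim \<eta> \<rho> \<phi> \<subseteq> sem prim \<eta> \<rho> \<psi>)"

text \<open>A term phi * a_1 * ... * a_k, represented as a pair (phi, [a_1,...,a_k]).\<close>
definition star_list :: "('p, 'v, 'a) assn \<Rightarrow> 'a list \<Rightarrow> ('p, 'v, 'a) assn" where
  "star_list \<phi> as = foldl (\<lambda>acc a. AStar acc (AVar a)) \<phi> as"

definition big_conj :: "('p, 'v, 'a) assn list \<Rightarrow> ('p, 'v, 'a) assn" where
  "big_conj ps = foldr AConj ps ATrue"

definition big_disj :: "('p, 'v, 'a) assn list \<Rightarrow> ('p, 'v, 'a) assn" where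
  "big_disj ps = foldr ADisj ps AFalse"

text \<open>An implication in canonical form: lhs = list of conjuncts (phi_i, [a_i1..]),
  rhs = list of disjuncts (psi_j, [b_j1..]).\<close>
definition lhs_assn :: "(('p, 'v, 'a) assn \<times> 'a list) list \<Rightarrow> ('p, 'v, 'a) assn" where
  "lhs_assn L = big_conj (map (\<lambda>(\<phi>, as). star_list \<phi> as) L)"

definition rhs_assn :: "(('p, 'v, 'a) assn \<times> 'a list) list \<Rightarrow> ('p, 'v, 'a) assn" where
  "rhs_assn R = big_disj (map (\<lambda>(\<psi>, bs). star_list \<psi> bs) R)"

definition canonical ::
  "(('p, 'v, 'a) assn \<times> 'a list) list \<Rightarrow> (('p, 'v, 'a) assn \<times> 'a list) list \<Rightarrow> bool" where
  "canonical L R \<longleftrightarrow> length L \<ge> 1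
     \<and> (\<forall>(\<phi>, as) \<in> set L. avars \<phi> = {})
     \<and> (\<forall>(\<psi>, bs) \<in> set R. avars \<psi> = {})
     \<and> (\<forall>(\<psi>, bs) \<in> set R. set bs \<subseteq> (\<Union>(\<phi>, as) \<in> set L. set as))"

definition Vset :: "(('p, 'v, 'a) assn \<times> 'a list) list \<Rightarrow> 'a set" where
  "Vset L = (\<Union>(\<phi>, as) \<in> set L. set as)"

text \<open>Pi(i)(c) and Omega(j)(c), with 0-based indices i < M, j < N.\<close>
definition Pi :: "(('p, 'v, 'a) assn \<times> 'a list) list \<Rightarrow> nat \<Rightarrow> 'a \<Rightarrow> nat" where
  "Pi L i c = count_list (snd (L ! i)) c"

definition Omega :: "(('p, 'v, 'a) assn \<times> 'a list) list \<Rightarrow> nat \<Rightarrow> 'a \<Rightarrow> nat" where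
  "Omega R j c = count_list (snd (R ! j)) c"

definition Pi_ge_Omega ::
  "(('p, 'v, 'a) assn \<times> 'a list) list \<Rightarrow> (('p, 'v, 'a) assn \<times> 'a list) list \<Rightarrow> nat \<Rightarrow> nat \<Rightarrow> bool" where
  "Pi_ge_Omega L R i j \<longleftrightarrow> (\<forall>c \<in> Vset L. Pi L i c \<ge> Omega R j c)"

text \<open>Unary meaning of an assertion free of assertion variables (rho is irrelevant).\<close>
definition sem0 :: "('p \<Rightarrow> ('v \<Rightarrow> int) \<Rightarrow> heap set) \<Rightarrow> ('v \<Rightarrow> int) \<Rightarrow> ('p, 'v, 'a) assn \<Rightarrow> heap set" where
  "sem0 prim \<eta> \<phi> = sem prim \<eta> (\<lambda>_. UNIV) \<phi>"

definition param_cond ::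
  "('p \<Rightarrow> ('v \<Rightarrow> int) \<Rightarrow> heap set) \<Rightarrow> ('v \<Rightarrow> int)
   \<Rightarrow> (('p, 'v, 'a) assn \<times> 'a list) list \<Rightarrow> (('p, 'v, 'a) assn \<times> 'a list) list \<Rightarrow> bool" where
  "param_cond prim \<eta> L R \<longleftrightarrow>
    (\<forall>h hs. length hs = length L
       \<and> (\<forall>i < length L. hs ! i \<sqsubseteq> h \<and> hs ! i \<in> sem0 prim \<eta> (fst (L ! i)))
     \<longrightarrow> (\<exists>i < length L. \<exists>j < length R. hs ! i \<in> sem0 prim \<eta> (fst (R ! j)) \<and> Pi_ge_Omega L R i j)
       \<or> (\<exists>j < length R. snd (R ! j) = [] \<and> h \<in> sem0 prim \<eta> (fst (R ! j))))"

end

theory Submission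
  imports Defs
begin

(* Every assertion denotes an upward closed set of heaps as long
   as the assertion variables do, and for an upward closed p the separating
   conjunction p * true is p itself.  Instantiating every assertion variable by
   the full relation true therefore collapses each term phi * a_1 * ... * a_k to
   phi, and unary validity of a canonical implication yields its "erasure":
   every heap satisfying all phi_i satisfies some psi_j.  With a single
   conjunct, the heap h_1 of the Parametricity Condition satisfies phi_1, hence
   some psi_j, and Pi(1) >= Omega(j) holds by hypothesis, giving alternative (1). *)

lemma Rep_heap_finite: "finite (dom (Rep_heap h))"
  and Rep_heap_no_zero: "0 \<notin> dom (Rep_heap h)"
  using Rep_heap[of h] by auto

lemma Rep_hunion: "Rep_heap (hunion f g) = Rep_heap f ++ Rep_heap g"
  unfolding hunion_def
  by (rule Abs_heap_inverse) (auto simp: Rep_heap_finite Rep_heap_no_zero)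

definition restr :: "heap \<Rightarrow> nat set \<Rightarrow> heap" where
  "restr h S = Abs_heap (Rep_heap h |` S)"

lemma Rep_restr: "Rep_heap (restr h S) = Rep_heap h |` S"
  unfolding restr_def
  by (rule Abs_heap_inverse)
     (auto simp: Rep_heap_no_zero intro: finite_subset[OF _ Rep_heap_finite[of h]])

definition hemp :: heap where
  "hemp = Abs_heap Map.empty"

lemma Rep_hemp: "Rep_heap hemp = Map.empty"
  unfolding hemp_def by (rule Abs_heap_inverse) auto

lemma hunion_hemp: "hunion f hemp = f"
  by (simp add: Rep_heap_inject[symmetric] Rep_hunion Rep_hemp)

lemma hdisj_hemp: "hdisj f hemp"
  by (simp add: hdisj_def Rep_hemp)

lemma hsub_hunion_left: "hdisj f g \<Longrightarrow> f \<sqsubseteq> hunion f g"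
  unfolding hsub_def hdisj_def Rep_hunion
  by (metis map_add_comm map_le_map_add)

lemma hsub_trans: "a \<sqsubseteq> b \<Longrightarrow> b \<sqsubseteq> c \<Longrightarrow> a \<sqsubseteq> c"
  unfolding hsub_def using map_le_trans by blast

text \<open>A heap extending a disjoint union f \<cdot> g splits as f \<cdot> g' with g' an
  extension of g: take g' to be the part outside the domain of f.\<close>
lemma hunion_extension_split:
  assumes disj: "hdisj f g" and ext: "hunion f g \<sqsubseteq> h"
  obtains g' where "g \<sqsubseteq> g'" "hdisj f g'" "hunion f g' = h"
proof
  let ?g' = "restr h (- dom (Rep_heap f))"
  have union_le: "Rep_heap f ++ Rep_heap g \<subseteq>\<^sub>m Rep_heap h"
    using ext by (simp add: hsub_def Rep_hunion)
  have f_le: "Rep_heap f \<subseteq>\<^sub>m Rep_heap h"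
    using union_le disj unfolding hdisj_def by (metis map_add_comm map_le_map_add map_le_trans)
  show "g \<sqsubseteq> ?g'"
    unfolding hsub_def Rep_restr map_le_def
  proof
    fix a assume a: "a \<in> dom (Rep_heap g)"
    then have "a \<notin> dom (Rep_heap f)" using disj unfolding hdisj_def by blast
    moreover have "(Rep_heap f ++ Rep_heap g) a = Rep_heap g a"
      using a by (auto simp: map_add_def split: option.splits)
    ultimately show "Rep_heap g a = (Rep_heap h |` (- dom (Rep_heap f))) a"
      using union_le a unfolding map_le_def by (auto simp: restrict_map_def)
  qed
  show "hdisj f ?g'" unfolding hdisj_def Rep_restr by auto
  show "hunion f ?g' = h"
    unfolding Rep_heap_inject[symmetric] Rep_hunion Rep_restr
  proof
    fix a show "(Rep_heap f ++ Rep_heap h |` (- dom (Rep_heap f))) a = Rep_heap h a"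
      using f_le unfolding map_le_def
      by (cases "a \<in> dom (Rep_heap f)") (auto simp: map_add_def restrict_map_def split: option.splits)
  qed
qed

lemma upclosed_sepstar:
  assumes "upclosed p" "upclosed q"
  shows "upclosed (sepstar p q)"
  unfolding upclosed_def
proof (intro allI impI)
  fix x h assume "x \<in> sepstar p q" and ext: "x \<sqsubseteq> h"
  then obtain f g where x: "x = hunion f g" and "f \<in> p" "g \<in> q" "hdisj f g"
    unfolding sepstar_def by blast
  then obtain g' where "g \<sqsubseteq> g'" "hdisj f g'" "hunion f g' = h"
    using ext hunion_extension_split by metis
  moreover have "g' \<in> q" using \<open>g \<in> q\<close> \<open>g \<sqsubseteq> g'\<close> assms(2) unfolding upclosed_def by blast
  ultimately show "h \<in> sepstar p q" using \<open>f \<in> p\<close> unfolding sepstar_def by blast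
qed

lemma upclosed_sem:
  assumes "\<forall>a. upclosed (\<rho> a)"
  shows "upclosed (sem prim \<eta> \<rho> \<phi>)"
  using assms
proof (induction \<phi> arbitrary: \<eta>)
  case (Prim P)
  then show ?case unfolding upclosed_def using hsub_trans by (simp add: Delta1_def) blast
next
  case (AStar p q)
  then show ?case by (simp add: upclosed_sepstar)
next
  case (AAll x p)
  then show ?case unfolding upclosed_def by simp blast
qed (auto simp: upclosed_def)

lemma sepstar_UNIV:
  assumes "upclosed p"
  shows "sepstar p UNIV = p"
proof
  show "sepstar p UNIV \<subseteq> p"
    using assms hsub_hunion_left unfolding sepstar_def upclosed_def by blast
  show "p \<subseteq> sepstar p UNIV"
  proof
    fix f assume "f \<in> p"
    then show "f \<in> sepstar p UNIV"
      unfolding sepstar_def by (metis (mono_tags, lifting) CollectI UNIV_I hdisj_hemp hunion_hemp)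
  qed
qed

lemma sem_star_list_trivial:
  "sem prim \<eta> (\<lambda>_. UNIV) (star_list \<phi> as) = sem prim \<eta> (\<lambda>_. UNIV) \<phi>"
proof (induction as arbitrary: \<phi>)
  case Nil
  then show ?case by (simp add: star_list_def)
next
  case (Cons a as)
  have "upclosed (sem prim \<eta> (\<lambda>_. UNIV) \<phi>)"
    by (rule upclosed_sem) (simp add: upclosed_def)
  then have "sem prim \<eta> (\<lambda>_. UNIV) (AStar \<phi> (AVar a)) = sem prim \<eta> (\<lambda>_. UNIV) \<phi>"
    by (simp add: sepstar_UNIV)
  with Cons.IH[of "AStar \<phi> (AVar a)"] show ?case by (simp add: star_list_def)
qed

lemma sem_big_conj:
  "sem prim \<eta> \<rho> (big_conj ps) = (\<Inter>p\<in>set ps. sem prim \<eta> \<rho> p)"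
  by (induction ps) (auto simp: big_conj_def)

lemma sem_big_disj:
  "sem prim \<eta> \<rho> (big_disj ps) = (\<Union>p\<in>set ps. sem prim \<eta> \<rho> p)"
  by (induction ps) (auto simp: big_disj_def)

lemma valid1_erasure:
  assumes "valid1 prim \<eta> (lhs_assn L) (rhs_assn R)"
  shows "(\<Inter>(\<phi>, as)\<in>set L. sem0 prim \<eta> \<phi>) \<subseteq> (\<Union>(\<psi>, bs)\<in>set R. sem0 prim \<eta> \<psi>)"
proof -
  have "sem prim \<eta> (\<lambda>_. UNIV) (lhs_assn L) \<subseteq> sem prim \<eta> (\<lambda>_. UNIV) (rhs_assn R)"
    using assms unfolding valid1_def by (auto simp: upclosed_def)
  then show ?thesis
    unfolding lhs_assn_def rhs_assn_def sem_big_conj sem_big_disj sem0_def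
    by (simp add: case_prod_beta sem_star_list_trivial)
qed

theorem mainTheorem7:
  fixes prim :: "'p \<Rightarrow> ('v \<Rightarrow> int) \<Rightarrow> heap set"
    and \<eta> :: "'v \<Rightarrow> int"
    and L R :: "(('p, 'v, 'a) assn \<times> 'a list) list"
  assumes "canonical L R"
    and "length L = 1"
    and "\<forall>j < length R. Pi_ge_Omega L R 0 j"
    and "valid1 prim \<eta> (lhs_assn L) (rhs_assn R)"
  shows "param_cond prim \<eta> L R"
  unfolding param_cond_def
proof (intro allI impI disjI1)
  fix h hs
  assume "length hs = length L \<and> (\<forall>i < length L. hs ! i \<sqsubseteq> h \<and> hs ! i \<in> sem0 prim \<eta> (fst (L ! i)))"
  then have h1: "hs ! 0 \<in> sem0 prim \<eta> (fst (L ! 0))" using assms(2) by simp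
  obtain \<phi> as where L: "L = [(\<phi>, as)]" using assms(2) by (cases L) auto
  then have "hs ! 0 \<in> (\<Union>(\<psi>, bs)\<in>set R. sem0 prim \<eta> \<psi>)"
    using valid1_erasure[OF assms(4)] h1 by auto
  then obtain j where "j < length R" "hs ! 0 \<in> sem0 prim \<eta> (fst (R ! j))"
    by (auto simp: in_set_conv_nth split: prod.splits)
  then show "\<exists>i < length L. \<exists>j < length R. hs ! i \<in> sem0 prim \<eta> (fst (R ! j)) \<and> Pi_ge_Omega L R i j"
    using assms(2,3) by auto
qed

end
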